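(* For every integer $n\geq 1$, $$2^n(1+x^2)\widehat{A}_n(x)=(1-x)^{n+1}P_n\!\left(\frac{1+x}{1-x}\right).$$
   Context: For a permutation $\pi=\pi(1)\pi(2)\cdots\pi(n)$ of $[n]=\{1,\ldots,n\}$, the number of alternating descents is ${\rm altdes}(\pi)=|\{2i: \pi(2i)<\pi(2i+1)\}\cup\{2i+1:\pi(2i+1)>\pi(2i+2)\}|$, where only indices $j\in\{1,\ldots,n-1\}$ are considered (so that $\pi(j+1)$ is defined). The alternating Eulerian polynomial is $\widehat{A}_n(x)=\sum_{\pi\in\mathfrak{S}_n}x^{{\rm altdes}(\pi)}$, where $\mathfrak{S}_n$ is the symmetric group on $[n]$. The derivative polynomials $P_n(x)$ (Hoffman) are defined by $P_n(\tan\theta)=\frac{d^n}{d\theta^n}\tan\theta$; equivalently $P_0(x)=x$ and $P_{n+1}(x)=(1+x^2)P_n'(x)$. *)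

theory Defs
  imports "HOL-Combinatorics.Permutations" "HOL-Computational_Algebra.Polynomial"
begin

definition altdes :: "nat \<Rightarrow> (nat \<Rightarrow> nat) \<Rightarrow> nat" where
  "altdes n \<pi> = card {j \<in> {1..<n}.
      (even j \<and> \<pi> j < \<pi> (Suc j)) \<or> (odd j \<and> \<pi> j > \<pi> (Suc j))}"

definition alt_eulerian :: "nat \<Rightarrow> real \<Rightarrow> real" where
  "alt_eulerian n x = (\<Sum>\<pi> \<in> {\<pi>. \<pi> permutes {1..n}}. x ^ altdes n \<pi>)"

fun deriv_poly :: "nat \<Rightarrow> real poly" where
  "deriv_poly 0 = [:0, 1:]"
| "deriv_poly (Suc n) = [:1, 0, 1:] * pderiv (deriv_poly n)"

end

theory Submission
  imports Defs "HOL-Combinatorics.Multiset_Permutations"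
begin

text \<open>Both sides, as functions of \<open>x\<close>, satisfy
  \<open>F (n + 1) = (1 + x\<^sup>2) ((1 - x) F' n + (n + 1) F n)\<close> and agree for \<open>n = 1\<close>. On the right
  this is the chain rule together with \<open>(1 - x)\<^sup>2 (1 + y\<^sup>2) = 2 (1 + x\<^sup>2)\<close> for
  \<open>y = (1 + x) / (1 - x)\<close>. On the left it is the recurrence for the alternating Eulerian
  polynomials \<open>2 A (n + 1) = (2 (1 + x) + (n - 1) (1 + x\<^sup>2)) A n + (1 - x) (1 + x\<^sup>2) A' n\<close>, proved by
  inserting both a new maximum and a new minimum into every gap of every permutation of \<open>[n]\<close>.
  At each gap exactly one of the two insertions creates alternating descents on both of its sides;
  the entries after the gap move by one position, which is undone by complementing them; and an
  inner gap loses the alternating descent it had.\<close>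

definition alt_desc :: "nat \<Rightarrow> 'a::linorder \<Rightarrow> 'a \<Rightarrow> bool" where
  "alt_desc j a b \<longleftrightarrow> (if even j then a < b else b < a)"

text \<open>\<open>j\<close> is the position of the first entry of the list (\<open>1\<close> in \<open>altdes\<close>).\<close>

fun alt_descents :: "nat \<Rightarrow> 'a::linorder list \<Rightarrow> nat" where
  "alt_descents j (a # b # xs) = of_bool (alt_desc j a b) + alt_descents (Suc j) (b # xs)"
| "alt_descents j _ = 0"

lemma alt_descents_conv_sum:
  "alt_descents j xs = (\<Sum>i<length xs - 1. of_bool (alt_desc (j + i) (xs ! i) (xs ! Suc i)))"
proof (induction j xs rule: alt_descents.induct)
  case (1 j a b xs)
  then show ?case
    by (simp add: sum.lessThan_Suc_shift del: sum.lessThan_Suc)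
qed auto

lemma alt_descents_Cons:
  "alt_descents j (a # xs) = (if xs = [] then 0 else of_bool (alt_desc j a (hd xs))) + alt_descents (Suc j) xs"
  by (cases xs) auto

lemma alt_descents_append:
  "alt_descents j (ys @ zs) = alt_descents j ys
     + (if ys = [] \<or> zs = [] then 0 else of_bool (alt_desc (j + length ys - 1) (last ys) (hd zs)))
     + alt_descents (j + length ys) zs"
proof (induction ys arbitrary: j)
  case (Cons a ys)
  then show ?case
    by (cases ys; cases zs) (auto simp: alt_descents_Cons)
qed simp

lemma alt_descents_Suc_Suc: "alt_descents (Suc (Suc j)) xs = alt_descents j xs"
  by (induction j xs rule: alt_descents.induct) (auto simp: alt_desc_def)

lemma alt_descents_map_mono:
  assumes "\<And>a b. a \<in> set xs \<Longrightarrow> b \<in> set xs \<Longrightarrow> h a < h b \<longleftrightarrow> a < b"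
  shows "alt_descents j (map h xs) = alt_descents j xs"
  using assms by (induction j xs rule: alt_descents.induct) (auto simp: alt_desc_def)

lemma alt_descents_map_antimono:
  assumes "\<And>a b. a \<in> set xs \<Longrightarrow> b \<in> set xs \<Longrightarrow> h a < h b \<longleftrightarrow> b < a"
  shows "alt_descents j (map h xs) = alt_descents (Suc j) xs"
  using assms by (induction j xs rule: alt_descents.induct) (auto simp: alt_desc_def)

lemma altdes_conv_alt_descents: "altdes n \<pi> = alt_descents 1 (map \<pi> [1..<Suc n])"
proof -
  define P where "P j \<longleftrightarrow> even j \<and> \<pi> j < \<pi> (Suc j) \<or> odd j \<and> \<pi> j > \<pi> (Suc j)" for j
  have "alt_descents 1 (map \<pi> [1..<Suc n]) = (\<Sum>i<n - 1. of_bool (P (Suc i)))"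
    unfolding alt_descents_conv_sum P_def alt_desc_def
    by (intro sum.cong) (auto simp del: upt_Suc)
  also have "\<dots> = (\<Sum>j\<in>{1..<n}. of_bool (P j))"
    by (cases n) (simp, simp only: One_nat_def diff_Suc_Suc minus_nat.diff_0 lessThan_atLeast0
        sum.atLeast_Suc_lessThan_Suc_shift o_def)
  also have "\<dots> = altdes n \<pi>"
    by (simp add: altdes_def P_def Int_def del: of_bool_or_iff)
  finally show ?thesis ..
qed

lemma inj_on_map_permutations_of_set:
  "inj_on h A \<Longrightarrow> inj_on (map h) (permutations_of_set A)"
  by (rule inj_on_mapI) (auto simp: permutations_of_set_def intro: inj_on_subset)

lemma sum_permutations_of_set_insert:
  assumes "finite V" "m \<notin> V"
  shows "(\<Sum>zs\<in>permutations_of_set (insert m V). F zs) =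
    (\<Sum>U\<in>Pow V. \<Sum>ys\<in>permutations_of_set U. \<Sum>ws\<in>permutations_of_set (V - U). F (ys @ m # ws))"
proof -
  let ?S = "SIGMA U:Pow V. permutations_of_set U \<times> permutations_of_set (V - U)"
  let ?before = "takeWhile (\<lambda>z. z \<noteq> m)" and ?after = "\<lambda>zs. tl (dropWhile (\<lambda>z. z \<noteq> m) zs)"
  have "(\<Sum>U\<in>Pow V. \<Sum>ys\<in>permutations_of_set U. \<Sum>ws\<in>permutations_of_set (V - U). F (ys @ m # ws))
      = (\<Sum>(U, ys, ws)\<in>?S. F (ys @ m # ws))"
    using assms(1) by (simp add: sum.Sigma sum.cartesian_product)
  also have "\<dots> = (\<Sum>zs\<in>permutations_of_set (insert m V). F zs)"
  proof (rule sum.reindex_bij_witness[where j = "\<lambda>(U, ys, ws). ys @ m # ws"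
        and i = "\<lambda>zs. (set (?before zs), ?before zs, ?after zs)"])
    fix a assume "a \<in> ?S"
    then obtain U ys ws where a: "a = (U, ys, ws)" "U \<subseteq> V"
      and ys: "set ys = U" "distinct ys" and ws: "set ws = V - U" "distinct ws"
      by (auto simp: permutations_of_set_def)
    then have "\<forall>z\<in>set ys. z \<noteq> m" using assms(2) by auto
    then have "?before (ys @ m # ws) = ys" "?after (ys @ m # ws) = ws"
      by (simp_all add: takeWhile_append2 dropWhile_append2)
    then show "(\<lambda>zs. (set (?before zs), ?before zs, ?after zs)) ((\<lambda>(U, ys, ws). ys @ m # ws) a) = a"
      using a ys by simp
    show "(\<lambda>(U, ys, ws). ys @ m # ws) a \<in> permutations_of_set (insert m V)"
      using a ys ws assms(2) by (auto simp: permutations_of_set_def)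
  next
    fix zs assume "zs \<in> permutations_of_set (insert m V)"
    then have zs: "set zs = insert m V" "distinct zs" by (auto simp: permutations_of_set_def)
    have ne: "dropWhile (\<lambda>z. z \<noteq> m) zs \<noteq> []"
      using zs by (simp add: dropWhile_eq_Nil_conv)
    then have "hd (dropWhile (\<lambda>z. z \<noteq> m) zs) = m"
      using hd_dropWhile by blast
    with ne have "dropWhile (\<lambda>z. z \<noteq> m) zs = m # ?after zs"
      by (metis list.collapse)
    then have split: "zs = ?before zs @ m # ?after zs"
      by (metis takeWhile_dropWhile_id)
    then show "(\<lambda>(U, ys, ws). ys @ m # ws) (set (?before zs), ?before zs, ?after zs) = zs"
      by simp
    have "distinct (?before zs @ m # ?after zs)" "set (?before zs @ m # ?after zs) = insert m V"
      using zs split by simp_all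
    then show "(set (?before zs), ?before zs, ?after zs) \<in> ?S"
      using assms(2) by (auto simp: permutations_of_set_def)
  qed (auto simp: case_prod_beta)
  finally show ?thesis ..
qed

lemma sum_permutations_of_set_Pow_append:
  assumes "finite V"
  shows "(\<Sum>U\<in>Pow V. \<Sum>ys\<in>permutations_of_set U. \<Sum>ws\<in>permutations_of_set (V - U). H ys ws) =
         (\<Sum>xs\<in>permutations_of_set V. \<Sum>g\<le>card V. H (take g xs) (drop g xs))"
proof -
  let ?S = "SIGMA U:Pow V. permutations_of_set U \<times> permutations_of_set (V - U)"
  have "(\<Sum>U\<in>Pow V. \<Sum>ys\<in>permutations_of_set U. \<Sum>ws\<in>permutations_of_set (V - U). H ys ws)
      = (\<Sum>(U, ys, ws)\<in>?S. H ys ws)"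
    using assms by (simp add: sum.Sigma sum.cartesian_product)
  also have "\<dots> = (\<Sum>(xs, g)\<in>permutations_of_set V \<times> {..card V}. H (take g xs) (drop g xs))"
  proof (rule sum.reindex_bij_witness[where j = "\<lambda>(U, ys, ws). (ys @ ws, length ys)"
        and i = "\<lambda>(xs, g). (set (take g xs), take g xs, drop g xs)"])
    fix a assume "a \<in> ?S"
    then obtain U ys ws where a: "a = (U, ys, ws)" "U \<subseteq> V"
      and ys: "set ys = U" "distinct ys" and ws: "set ws = V - U" "distinct ws"
      by (auto simp: permutations_of_set_def)
    show "(\<lambda>(xs, g). (set (take g xs), take g xs, drop g xs)) ((\<lambda>(U, ys, ws). (ys @ ws, length ys)) a) = a"
      using a ys by simp
    have "length ys \<le> card V"
      using a ys assms by (metis distinct_card card_mono)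
    then show "(\<lambda>(U, ys, ws). (ys @ ws, length ys)) a \<in> permutations_of_set V \<times> {..card V}"
      using a ys ws by (auto simp: permutations_of_set_def)
  next
    fix b assume "b \<in> permutations_of_set V \<times> {..card V}"
    then obtain xs g where b: "b = (xs, g)" "g \<le> card V" and xs: "set xs = V" "distinct xs"
      by (auto simp: permutations_of_set_def)
    show "(\<lambda>(U, ys, ws). (ys @ ws, length ys)) ((\<lambda>(xs, g). (set (take g xs), take g xs, drop g xs)) b) = b"
      using b xs distinct_card[of xs] by simp
    have "set (take g xs) \<inter> set (drop g xs) = {}" "set (take g xs) \<union> set (drop g xs) = V"
      using xs by (simp add: set_take_disj_set_drop_if_distinct, metis append_take_drop_id set_append)
    then have "set (drop g xs) = V - set (take g xs)"
      by blast
    then show "(\<lambda>(xs, g). (set (take g xs), take g xs, drop g xs)) b \<in> ?S"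
      using b xs by (auto simp: permutations_of_set_def dest: in_set_takeD)
  qed (auto simp: case_prod_beta)
  also have "\<dots> = (\<Sum>xs\<in>permutations_of_set V. \<Sum>g\<le>card V. H (take g xs) (drop g xs))"
    by (simp add: sum.cartesian_product)
  finally show ?thesis .
qed

lemma sum_alt_descents_permutations_of_set_card:
  fixes W :: "'a::linorder set"
  assumes "finite W"
  shows "(\<Sum>ws\<in>permutations_of_set W. f (alt_descents j ws)) =
         (\<Sum>ws\<in>permutations_of_set {..<card W}. f (alt_descents j ws))"
proof -
  define s where "s = sorted_list_of_set W"
  have s: "length s = card W" "set s = W" "sorted_wrt (<) s"
    using assms by (simp_all add: s_def)
  have mono: "s ! a < s ! b \<longleftrightarrow> a < b" if "a < card W" "b < card W" for a b
    using that s by (metis linorder_neqE_nat not_less_iff_gr_or_eq sorted_wrt_nth_less)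
  have inj: "inj_on ((!) s) {..<card W}"
    using mono by (intro inj_onI) (metis lessThan_iff not_less_iff_gr_or_eq)
  have "(!) s ` {..<card W} = W"
    using s by (metis atLeast_upt image_set map_nth)
  then have "permutations_of_set W = map ((!) s) ` permutations_of_set {..<card W}"
    using permutations_of_set_image_inj[OF inj] by simp
  then have "(\<Sum>ws\<in>permutations_of_set W. f (alt_descents j ws)) =
      (\<Sum>ws\<in>permutations_of_set {..<card W}. f (alt_descents j (map ((!) s) ws)))"
    by (simp add: sum.reindex inj_on_map_permutations_of_set[OF inj])
  also have "\<dots> = (\<Sum>ws\<in>permutations_of_set {..<card W}. f (alt_descents j ws))"
    using mono by (intro sum.cong refl) (subst alt_descents_map_mono, auto simp: permutations_of_set_def)
  finally show ?thesis .
qed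

text \<open>Complementation \<open>w \<mapsto> k - 1 - w\<close> reverses the order, which shifts positions by one.\<close>

lemma sum_alt_descents_permutations_of_set_Suc:
  fixes W :: "'a::linorder set"
  assumes "finite W"
  shows "(\<Sum>ws\<in>permutations_of_set W. f (alt_descents (Suc j) ws)) =
         (\<Sum>ws\<in>permutations_of_set W. f (alt_descents j ws))"
proof -
  define k where "k = card W"
  define h where "h w = k - 1 - w" for w
  have antimono: "h a < h b \<longleftrightarrow> b < a" if "a < k" "b < k" for a b
    using that unfolding h_def by linarith
  have inj: "inj_on h {..<k}"
    by (auto simp: h_def inj_on_def)
  have "h ` {..<k} = {..<k}"
  proof
    show "h ` {..<k} \<subseteq> {..<k}"
      by (auto simp: h_def)
    have "w \<in> h ` {..<k}" if "w < k" for w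
      using that by (intro image_eqI[of w h "h w"]) (auto simp: h_def)
    then show "{..<k} \<subseteq> h ` {..<k}"
      by auto
  qed
  then have "permutations_of_set {..<k} = map h ` permutations_of_set {..<k}"
    by (metis permutations_of_set_image_inj[OF inj])
  then have "(\<Sum>ws\<in>permutations_of_set {..<k}. f (alt_descents j ws)) =
      (\<Sum>ws\<in>permutations_of_set {..<k}. f (alt_descents j (map h ws)))"
    by (rule sum.reindex_cong[OF inj_on_map_permutations_of_set[OF inj]]) simp
  also have "\<dots> = (\<Sum>ws\<in>permutations_of_set {..<k}. f (alt_descents (Suc j) ws))"
  proof (rule sum.cong[OF refl])
    fix ws assume "ws \<in> permutations_of_set {..<k}"
    then have "set ws = {..<k}"
      by (simp add: permutations_of_set_def)
    then have "alt_descents j (map h ws) = alt_descents (Suc j) ws"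
      using antimono by (intro alt_descents_map_antimono) blast
    then show "f (alt_descents j (map h ws)) = f (alt_descents (Suc j) ws)"
      by simp
  qed
  finally show ?thesis
    by (simp only: sum_alt_descents_permutations_of_set_card[OF assms] k_def)
qed

lemma alt_descents_insert_max_min:
  fixes x :: "'b::comm_semiring_1"
  assumes "\<And>z. z \<in> set ys \<union> set ws \<Longrightarrow> lo < z \<and> z < hi" "ys \<noteq> [] \<or> ws \<noteq> []"
  shows "x ^ alt_descents 1 (ys @ hi # ws) + x ^ alt_descents 1 (ys @ lo # ws)
       = x ^ (alt_descents 1 ys + alt_descents (length ys) ws)
         * (if ys = [] \<or> ws = [] then 1 + x else 1 + x\<^sup>2)"
proof -
  define L where "L = length ys"
  define d where "d = alt_descents 1 ys + alt_descents L ws"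
  have split: "alt_descents 1 (ys @ m # ws) = d
      + (if ys = [] then 0 else of_bool (alt_desc L (last ys) m))
      + (if ws = [] then 0 else of_bool (alt_desc (Suc L) m (hd ws)))" for m
    by (simp add: alt_descents_append alt_descents_Cons alt_descents_Suc_Suc d_def L_def)
  have "ys \<noteq> [] \<Longrightarrow> lo < last ys \<and> last ys < hi" "ws \<noteq> [] \<Longrightarrow> lo < hd ws \<and> hd ws < hi"
    using assms(1) by simp_all
  then have
    "alt_descents 1 (ys @ hi # ws) = d + (if even L then of_bool (ys \<noteq> []) + of_bool (ws \<noteq> []) else 0)"
    "alt_descents 1 (ys @ lo # ws) = d + (if even L then 0 else of_bool (ys \<noteq> []) + of_bool (ws \<noteq> []))"
    unfolding split by (auto simp: alt_desc_def)
  then show ?thesis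
    using assms(2) unfolding d_def[symmetric] L_def[symmetric]
    by (cases "even L"; cases "ys = []"; cases "ws = []") (simp_all add: algebra_simps power2_eq_square)
qed

lemma sum_power_minus_of_bool:
  fixes x :: "'a::comm_ring_1" and m :: nat and P :: "nat \<Rightarrow> bool"
  defines "s \<equiv> \<Sum>k<m. of_bool (P k)"
  shows "(\<Sum>i<m. x ^ (s - of_bool (P i))) = of_nat s * x ^ (s - 1) + (of_nat m - of_nat s) * x ^ s"
proof -
  have "x ^ (s - of_bool (P i)) = of_bool (P i) * x ^ (s - 1) + (1 - of_bool (P i)) * x ^ s" for i
    by simp
  then have "(\<Sum>i<m. x ^ (s - of_bool (P i)))
      = (\<Sum>i<m. of_bool (P i) * x ^ (s - 1) + (1 - of_bool (P i)) * x ^ s)"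
    by simp
  also have "\<dots> = of_nat s * x ^ (s - 1) + (of_nat m - of_nat s) * x ^ s"
    by (simp add: s_def sum.distrib sum_subtractf flip: sum_distrib_right del: sum_of_bool_eq)
  finally show ?thesis .
qed

lemma sum_cuts_alt_descents:
  fixes x :: real
  assumes "length xs = Suc m"
  defines "d \<equiv> alt_descents 1 xs"
  shows "(\<Sum>g\<le>Suc m. x ^ (alt_descents 1 (take g xs) + alt_descents (Suc g) (drop g xs))
            * (if take g xs = [] \<or> drop g xs = [] then 1 + x else 1 + x\<^sup>2))
     = (2 * (1 + x) + real m * (1 + x\<^sup>2)) * x ^ d + (1 - x) * (1 + x\<^sup>2) * (real d * x ^ (d - 1))"
proof -
  define f where "f g = x ^ (alt_descents 1 (take g xs) + alt_descents (Suc g) (drop g xs))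
            * (if take g xs = [] \<or> drop g xs = [] then 1 + x else 1 + x\<^sup>2)" for g
  define P where "P i \<longleftrightarrow> alt_desc (Suc i) (xs ! i) (xs ! Suc i)" for i
  have d: "d = (\<Sum>i<m. of_bool (P i))"
    using assms by (simp add: d_def alt_descents_conv_sum P_def del: sum_of_bool_eq)
  have inner: "f (Suc i) = (1 + x\<^sup>2) * x ^ (d - of_bool (P i))" if "i < m" for i
  proof -
    have "take (Suc i) xs = take i xs @ [xs ! i]" "drop (Suc i) xs \<noteq> []"
      "hd (drop (Suc i) xs) = xs ! Suc i"
      using that assms by (simp_all add: take_Suc_conv_app_nth hd_drop_conv_nth)
    then have "d = alt_descents 1 (take (Suc i) xs) + of_bool (P i)
        + alt_descents (Suc (Suc i)) (drop (Suc i) xs)"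
      unfolding d_def P_def
      by (subst append_take_drop_id[of "Suc i", symmetric], subst alt_descents_append) simp
    then show ?thesis
      using \<open>drop (Suc i) xs \<noteq> []\<close> assms(1) by (auto simp: f_def)
  qed
  have "(\<Sum>g\<le>Suc m. f g) = f 0 + (\<Sum>i\<le>m. f (Suc i))"
    by (rule sum.atMost_Suc_shift)
  also have "(\<Sum>i\<le>m. f (Suc i)) = (\<Sum>i<m. f (Suc i)) + f (Suc m)"
    by (simp flip: lessThan_Suc_atMost)
  also have "f 0 = (1 + x) * x ^ d"
    by (simp add: f_def d_def)
  also have "f (Suc m) = (1 + x) * x ^ d"
    using assms by (simp add: f_def d_def)
  also have "(\<Sum>i<m. f (Suc i)) = (1 + x\<^sup>2) * (real d * x ^ (d - 1) + (real m - real d) * x ^ d)"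
    using sum_power_minus_of_bool[where x = x and m = m and P = P]
    by (simp add: inner d sum_distrib_left[symmetric])
  finally show ?thesis
    by (cases d) (simp_all add: f_def algebra_simps)
qed

lemma sum_permutes_conv_permutations_of_set:
  "(\<Sum>\<pi> | \<pi> permutes {1..n}. f (altdes n \<pi>)) =
   (\<Sum>xs\<in>permutations_of_set {1..n}. f (alt_descents 1 xs))"
proof -
  let ?l = "\<lambda>\<pi>. map \<pi> [1..<Suc n]"
  have inj: "inj_on ?l {\<pi>. \<pi> permutes {1..n}}"
  proof (rule inj_onI)
    fix \<sigma> \<tau>
    assume "\<sigma> \<in> {\<pi>. \<pi> permutes {1..n}}" "\<tau> \<in> {\<pi>. \<pi> permutes {1..n}}" "?l \<sigma> = ?l \<tau>"
    then have "\<sigma> k = \<tau> k" for k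
      by (cases "k \<in> {1..n}") (auto simp: map_eq_conv permutes_not_in simp del: upt_Suc)
    then show "\<sigma> = \<tau>" ..
  qed
  have "?l \<pi> \<in> permutations_of_set {1..n}" if "\<pi> permutes {1..n}" for \<pi>
  proof
    have "set [1..<Suc n] = {1..n}"
      by auto
    then show "set (?l \<pi>) = {1..n}" "distinct (?l \<pi>)"
      using permutes_image[OF that] permutes_inj_on[OF that] by (simp_all add: distinct_map del: upt_Suc)
  qed
  then have "?l ` {\<pi>. \<pi> permutes {1..n}} \<subseteq> permutations_of_set {1..n}"
    by blast
  moreover have "card (?l ` {\<pi>. \<pi> permutes {1..n}}) = card (permutations_of_set {1..n})"
    unfolding card_image[OF inj] by (simp add: card_permutations)
  ultimately have "?l ` {\<pi>. \<pi> permutes {1..n}} = permutations_of_set {1..n}"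
    by (intro card_subset_eq) simp_all
  then have "(\<Sum>xs\<in>permutations_of_set {1..n}. f (alt_descents 1 xs)) =
      (\<Sum>\<pi> | \<pi> permutes {1..n}. f (altdes n \<pi>))"
    by (intro sum.reindex_cong[OF inj]) (simp_all add: altdes_conv_alt_descents)
  then show ?thesis ..
qed

definition alt_eulerian_deriv :: "nat \<Rightarrow> real \<Rightarrow> real" where
  "alt_eulerian_deriv n x = (\<Sum>\<pi> | \<pi> permutes {1..n}. real (altdes n \<pi>) * x ^ (altdes n \<pi> - 1))"

lemma has_real_derivative_alt_eulerian:
  "(alt_eulerian n has_real_derivative alt_eulerian_deriv n x) (at x)"
  unfolding alt_eulerian_def[abs_def] alt_eulerian_deriv_def
  by (intro DERIV_sum) (auto intro!: derivative_eq_intros)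

lemma sum_alt_descents_insert_max_min_suffixes:
  fixes W :: "'a::linorder set" and x :: "'b::comm_semiring_1"
  assumes "finite W" "ys \<noteq> [] \<or> W \<noteq> {}" "\<And>z. z \<in> set ys \<union> W \<Longrightarrow> lo < z \<and> z < hi"
  shows "(\<Sum>ws\<in>permutations_of_set W. x ^ alt_descents 1 (ys @ hi # ws) + x ^ alt_descents 1 (ys @ lo # ws))
       = (\<Sum>ws\<in>permutations_of_set W. x ^ (alt_descents 1 ys + alt_descents (Suc (length ys)) ws)
            * (if ys = [] \<or> ws = [] then 1 + x else 1 + x\<^sup>2))"
proof -
  let ?a = "alt_descents 1 ys" and ?c = "if ys = [] \<or> W = {} then 1 + x else 1 + x\<^sup>2"
  have ws_Nil: "ws = [] \<longleftrightarrow> W = {}" if "ws \<in> permutations_of_set W" for ws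
    using permutations_of_setD(1)[OF that] by (metis set_empty)
  have "(\<Sum>ws\<in>permutations_of_set W. x ^ alt_descents 1 (ys @ hi # ws) + x ^ alt_descents 1 (ys @ lo # ws))
      = (\<Sum>ws\<in>permutations_of_set W. x ^ (?a + alt_descents (length ys) ws) * ?c)"
  proof (rule sum.cong[OF refl])
    fix ws assume ws: "ws \<in> permutations_of_set W"
    have "ys \<noteq> [] \<or> ws \<noteq> []" "\<And>z. z \<in> set ys \<union> set ws \<Longrightarrow> lo < z \<and> z < hi"
      using assms(2,3) ws_Nil[OF ws] permutations_of_setD(1)[OF ws] by auto
    then have "x ^ alt_descents 1 (ys @ hi # ws) + x ^ alt_descents 1 (ys @ lo # ws) =
        x ^ (?a + alt_descents (length ys) ws) * (if ys = [] \<or> ws = [] then 1 + x else 1 + x\<^sup>2)"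
      by (intro alt_descents_insert_max_min)
    then show "x ^ alt_descents 1 (ys @ hi # ws) + x ^ alt_descents 1 (ys @ lo # ws) =
        x ^ (?a + alt_descents (length ys) ws) * ?c"
      by (simp only: ws_Nil[OF ws])
  qed
  also have "\<dots> = (\<Sum>ws\<in>permutations_of_set W. x ^ (?a + alt_descents (Suc (length ys)) ws) * ?c)"
    using sum_alt_descents_permutations_of_set_Suc[OF assms(1), of "\<lambda>k. x ^ (?a + k) * ?c"] by simp
  also have "\<dots> = (\<Sum>ws\<in>permutations_of_set W. x ^ (?a + alt_descents (Suc (length ys)) ws)
      * (if ys = [] \<or> ws = [] then 1 + x else 1 + x\<^sup>2))"
    by (intro sum.cong refl) (simp add: ws_Nil)
  finally show ?thesis .
qed

lemma sum_insert_max_min_alt_descents: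
  fixes V :: "'a::linorder set" and x :: "'b::comm_semiring_1"
  assumes "finite V" "V \<noteq> {}" "\<And>z. z \<in> V \<Longrightarrow> lo < z \<and> z < hi"
  shows "(\<Sum>zs\<in>permutations_of_set (insert hi V). x ^ alt_descents 1 zs)
       + (\<Sum>zs\<in>permutations_of_set (insert lo V). x ^ alt_descents 1 zs)
       = (\<Sum>xs\<in>permutations_of_set V. \<Sum>g\<le>card V.
            x ^ (alt_descents 1 (take g xs) + alt_descents (Suc g) (drop g xs))
            * (if take g xs = [] \<or> drop g xs = [] then 1 + x else 1 + x\<^sup>2))"
proof -
  define H where "H ys ws = x ^ (alt_descents 1 ys + alt_descents (Suc (length ys)) ws)
      * (if ys = [] \<or> ws = [] then 1 + x else 1 + x\<^sup>2)" for ys ws :: "'a list"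
  have "hi \<notin> V" "lo \<notin> V"
    using assms(3) by blast+
  then have "(\<Sum>zs\<in>permutations_of_set (insert hi V). x ^ alt_descents 1 zs)
       + (\<Sum>zs\<in>permutations_of_set (insert lo V). x ^ alt_descents 1 zs)
     = (\<Sum>U\<in>Pow V. \<Sum>ys\<in>permutations_of_set U. \<Sum>ws\<in>permutations_of_set (V - U).
        x ^ alt_descents 1 (ys @ hi # ws) + x ^ alt_descents 1 (ys @ lo # ws))"
    using assms(1) by (simp add: sum_permutations_of_set_insert sum.distrib)
  also have "\<dots> = (\<Sum>U\<in>Pow V. \<Sum>ys\<in>permutations_of_set U.
      \<Sum>ws\<in>permutations_of_set (V - U). H ys ws)"
  proof (rule sum.cong[OF refl], rule sum.cong[OF refl])
    fix U ys assume "U \<in> Pow V" "ys \<in> permutations_of_set U"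
    then have "ys \<noteq> [] \<or> V - U \<noteq> {}" "set ys \<union> (V - U) \<subseteq> V"
      using assms(2) by (auto simp: permutations_of_set_def)
    with assms(1,3) show "(\<Sum>ws\<in>permutations_of_set (V - U).
        x ^ alt_descents 1 (ys @ hi # ws) + x ^ alt_descents 1 (ys @ lo # ws)) =
      (\<Sum>ws\<in>permutations_of_set (V - U). H ys ws)"
      unfolding H_def by (intro sum_alt_descents_insert_max_min_suffixes) auto
  qed
  also have "\<dots> = (\<Sum>xs\<in>permutations_of_set V. \<Sum>g\<le>card V. H (take g xs) (drop g xs))"
    using assms(1) by (rule sum_permutations_of_set_Pow_append)
  finally show ?thesis
    by (auto simp: H_def length_finite_permutations_of_set min_absorb1 intro!: sum.cong)
qed

lemma alt_eulerian_Suc: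
  fixes x :: real
  assumes "n \<ge> 1"
  shows "2 * alt_eulerian (Suc n) x = (2 * (1 + x) + (real n - 1) * (1 + x\<^sup>2)) * alt_eulerian n x
      + (1 - x) * (1 + x\<^sup>2) * alt_eulerian_deriv n x"
proof -
  define V where "V = {1..n}"
  have V: "finite V" "card V = n" "V \<noteq> {}" "\<And>z. z \<in> V \<Longrightarrow> 0 < z \<and> z < Suc n"
    using assms by (auto simp: V_def)
  have A_Suc: "alt_eulerian (Suc n) x = (\<Sum>zs\<in>permutations_of_set (insert m V). x ^ alt_descents 1 zs)"
    if "m \<notin> V" for m
  proof -
    have "card (insert m V) = Suc n"
      using V that by simp
    then show ?thesis
      unfolding alt_eulerian_def sum_permutes_conv_permutations_of_set
      using sum_alt_descents_permutations_of_set_card[of "insert m V" "\<lambda>k. x ^ k" 1]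
        sum_alt_descents_permutations_of_set_card[of "{1..Suc n}" "\<lambda>k. x ^ k" 1] V(1)
      by simp
  qed
  obtain m where n: "n = Suc m"
    using assms by (cases n) auto
  have "2 * alt_eulerian (Suc n) x = (\<Sum>xs\<in>permutations_of_set V. \<Sum>g\<le>n.
      x ^ (alt_descents 1 (take g xs) + alt_descents (Suc g) (drop g xs))
      * (if take g xs = [] \<or> drop g xs = [] then 1 + x else 1 + x\<^sup>2))"
    using A_Suc[of 0] A_Suc[of "Suc n"] sum_insert_max_min_alt_descents[OF V(1,3,4), of x] V
    by (simp add: V_def)
  also have "\<dots> = (\<Sum>xs\<in>permutations_of_set V.
      (2 * (1 + x) + (real n - 1) * (1 + x\<^sup>2)) * x ^ alt_descents 1 xs
      + (1 - x) * (1 + x\<^sup>2) * (real (alt_descents 1 xs) * x ^ (alt_descents 1 xs - 1)))"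
  proof (rule sum.cong[OF refl])
    fix xs assume "xs \<in> permutations_of_set V"
    then have "length xs = Suc m"
      using V(2) n by (simp add: length_finite_permutations_of_set)
    from sum_cuts_alt_descents[OF this, of x] show "(\<Sum>g\<le>n.
      x ^ (alt_descents 1 (take g xs) + alt_descents (Suc g) (drop g xs))
      * (if take g xs = [] \<or> drop g xs = [] then 1 + x else 1 + x\<^sup>2)) =
      (2 * (1 + x) + (real n - 1) * (1 + x\<^sup>2)) * x ^ alt_descents 1 xs
      + (1 - x) * (1 + x\<^sup>2) * (real (alt_descents 1 xs) * x ^ (alt_descents 1 xs - 1))"
      by (simp only: n) simp
  qed
  also have "\<dots> = (2 * (1 + x) + (real n - 1) * (1 + x\<^sup>2)) * alt_eulerian n x
      + (1 - x) * (1 + x\<^sup>2) * alt_eulerian_deriv n x"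
    unfolding alt_eulerian_def alt_eulerian_deriv_def V_def
      sum_permutes_conv_permutations_of_set[where f = "\<lambda>d. x ^ d"]
      sum_permutes_conv_permutations_of_set[where f = "\<lambda>d. real d * x ^ (d - 1)"]
    by (simp add: sum.distrib sum_distrib_left)
  finally show ?thesis .
qed

definition alt_eulerian_scaled :: "nat \<Rightarrow> real \<Rightarrow> real" where
  "alt_eulerian_scaled n x = 2 ^ n * (1 + x\<^sup>2) * alt_eulerian n x"

definition deriv_poly_cayley :: "nat \<Rightarrow> real \<Rightarrow> real" where
  "deriv_poly_cayley n x = (1 - x) ^ (n + 1) * poly (deriv_poly n) ((1 + x) / (1 - x))"

lemma cayley_square:
  fixes x :: real
  assumes "x \<noteq> 1"
  shows "(1 - x)\<^sup>2 * (1 + ((1 + x) / (1 - x))\<^sup>2) = 2 * (1 + x\<^sup>2)"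
proof -
  have "(1 - x) * ((1 + x) / (1 - x)) = 1 + x"
    using assms by simp
  then have "(1 - x)\<^sup>2 * (1 + ((1 + x) / (1 - x))\<^sup>2) = (1 - x)\<^sup>2 + (1 + x)\<^sup>2"
    by (metis distrib_left mult.right_neutral power_mult_distrib)
  then show ?thesis
    by (simp add: power2_eq_square algebra_simps)
qed

lemma has_real_derivative_alt_eulerian_scaled:
  "(alt_eulerian_scaled n has_real_derivative
      2 ^ n * (2 * x * alt_eulerian n x + (1 + x\<^sup>2) * alt_eulerian_deriv n x)) (at x)"
  unfolding alt_eulerian_scaled_def[abs_def]
  by (auto intro!: derivative_eq_intros has_real_derivative_alt_eulerian simp: algebra_simps)

lemma alt_eulerian_scaled_Suc:
  assumes "n \<ge> 1" "(alt_eulerian_scaled n has_real_derivative D) (at x)"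
  shows "alt_eulerian_scaled (Suc n) x = (1 + x\<^sup>2) * ((1 - x) * D + real (Suc n) * alt_eulerian_scaled n x)"
proof -
  have "D = 2 ^ n * (2 * x * alt_eulerian n x + (1 + x\<^sup>2) * alt_eulerian_deriv n x)"
    using assms(2) has_real_derivative_alt_eulerian_scaled by (rule DERIV_unique)
  have "alt_eulerian_scaled (Suc n) x = 2 ^ n * (1 + x\<^sup>2) * (2 * alt_eulerian (Suc n) x)"
    by (simp add: alt_eulerian_scaled_def)
  also have "\<dots> = 2 ^ n * (1 + x\<^sup>2) * ((2 * (1 + x) + (real n - 1) * (1 + x\<^sup>2)) * alt_eulerian n x
      + (1 - x) * (1 + x\<^sup>2) * alt_eulerian_deriv n x)"
    by (simp only: alt_eulerian_Suc[OF assms(1)])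
  also have "\<dots> = (1 + x\<^sup>2) * ((1 - x) * D + real (Suc n) * alt_eulerian_scaled n x)"
    unfolding \<open>D = _\<close> alt_eulerian_scaled_def of_nat_Suc by algebra
  finally show ?thesis .
qed

lemma has_real_derivative_deriv_poly_cayley:
  assumes "x \<noteq> 1"
  shows "(deriv_poly_cayley n has_real_derivative
     - real (Suc n) * (1 - x) ^ n * poly (deriv_poly n) ((1 + x) / (1 - x))
      + (1 - x) ^ Suc n * (poly (pderiv (deriv_poly n)) ((1 + x) / (1 - x)) * (2 / (1 - x)\<^sup>2))) (at x)"
proof -
  have "((\<lambda>x. (1 - x) ^ Suc n) has_real_derivative - real (Suc n) * (1 - x) ^ n) (at x)"
    by (auto intro!: derivative_eq_intros) (cases n; simp add: algebra_simps)
  moreover have "((\<lambda>x. (1 + x) / (1 - x)) has_real_derivative 2 / (1 - x)\<^sup>2) (at x)"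
    using assms by (auto intro!: derivative_eq_intros simp: field_simps power2_eq_square)
  then have "((\<lambda>x. poly (deriv_poly n) ((1 + x) / (1 - x))) has_real_derivative
      poly (pderiv (deriv_poly n)) ((1 + x) / (1 - x)) * (2 / (1 - x)\<^sup>2)) (at x)"
    by (rule DERIV_chain2[OF poly_DERIV])
  ultimately show ?thesis
    unfolding deriv_poly_cayley_def[abs_def] Suc_eq_plus1[symmetric]
    by (rule DERIV_cong[OF DERIV_mult]) (simp add: algebra_simps)
qed

lemma deriv_poly_cayley_Suc:
  assumes "x \<noteq> 1" "(deriv_poly_cayley n has_real_derivative D) (at x)"
  shows "deriv_poly_cayley (Suc n) x = (1 + x\<^sup>2) * ((1 - x) * D + real (Suc n) * deriv_poly_cayley n x)"
proof -
  define y where "y = (1 + x) / (1 - x)"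
  define t where "t = (1 - x) ^ n"
  define P where "P = poly (deriv_poly n) y"
  define P' where "P' = poly (pderiv (deriv_poly n)) y"
  have D: "D = - real (Suc n) * t * P + (1 - x) * t * (P' * (2 / (1 - x)\<^sup>2))"
    using DERIV_unique[OF assms(2) has_real_derivative_deriv_poly_cayley[OF assms(1)]]
    by (simp add: y_def t_def P_def P'_def)
  have "deriv_poly_cayley n x = (1 - x) * t * P"
    by (simp add: deriv_poly_cayley_def y_def[symmetric] t_def P_def)
  then have "(1 - x) * D + real (Suc n) * deriv_poly_cayley n x
      = ((1 - x) * (1 - x) * (2 / (1 - x)\<^sup>2)) * t * P'"
    unfolding D by (simp only:) (simp add: algebra_simps)
  also have "(1 - x) * (1 - x) * (2 / (1 - x)\<^sup>2) = 2"
    using assms(1) by (simp add: power2_eq_square)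
  finally have "(1 - x) * D + real (Suc n) * deriv_poly_cayley n x = 2 * t * P'" .
  moreover have "deriv_poly_cayley (Suc n) x = (1 - x)\<^sup>2 * (1 + y\<^sup>2) * (t * P')"
    by (simp add: deriv_poly_cayley_def y_def[symmetric] t_def P'_def power2_eq_square algebra_simps)
  moreover have "(1 - x)\<^sup>2 * (1 + y\<^sup>2) = 2 * (1 + x\<^sup>2)"
    unfolding y_def using assms(1) by (rule cayley_square)
  ultimately show ?thesis
    by simp
qed

lemma alt_eulerian_scaled_eq_deriv_poly_cayley:
  assumes "n \<ge> 1" "x \<noteq> 1"
  shows "alt_eulerian_scaled n x = deriv_poly_cayley n x"
  using assms
proof (induction n arbitrary: x rule: nat_induct_at_least)
  case base
  have "alt_eulerian 1 x = 1"
    unfolding alt_eulerian_def sum_permutes_conv_permutations_of_set by simp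
  then show ?case
    using cayley_square[OF base]
    by (simp add: alt_eulerian_scaled_def deriv_poly_cayley_def pderiv_pCons power2_eq_square)
next
  case (Suc n)
  obtain D where D: "(alt_eulerian_scaled n has_real_derivative D) (at x)"
    using has_real_derivative_alt_eulerian_scaled by blast
  have "(deriv_poly_cayley n has_real_derivative D) (at x)"
  proof (rule has_field_derivative_transform_within_open[OF D])
    show "open {z :: real. z \<noteq> 1}" "x \<in> {z. z \<noteq> 1}"
      using Suc.prems by (simp_all add: open_Collect_neq continuous_on_id continuous_on_const)
    show "alt_eulerian_scaled n z = deriv_poly_cayley n z" if "z \<in> {z. z \<noteq> 1}" for z
      using that Suc.IH by simp
  qed
  then show ?case
    using Suc alt_eulerian_scaled_Suc[OF Suc.hyps D] deriv_poly_cayley_Suc[OF Suc.prems] by simp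
qed

theorem mainTheorem1:
  fixes n :: nat and x :: real
  assumes "n \<ge> 1" and "x \<noteq> 1"
  shows "2 ^ n * (1 + x\<^sup>2) * alt_eulerian n x
         = (1 - x) ^ (n + 1) * poly (deriv_poly n) ((1 + x) / (1 - x))"
  using alt_eulerian_scaled_eq_deriv_poly_cayley[OF assms]
  unfolding alt_eulerian_scaled_def deriv_poly_cayley_def .

end
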